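(* Let $L\subseteq\Sigma^\omega$ be a prefix-independent language and let $\mathcal{B}$ be a history-deterministic generalised coBüchi automaton recognising $L$. Let $\mathcal{A}_{\min}$ be a nice, safe minimal and safe centralised history-deterministic coBüchi automaton recognising $L$, with safe components having state sets $S_1,\dots,S_k$, and let $n_{\max}=\max_{1\le i\le k}|S_i|$ (this is the number of states of the automaton $\mathcal{A}_{\mathrm{PI}}$, which has states $\{p_1,\dots,p_{n_{\max}}\}$, all transitions, and for each $i$ makes colour $i$ absent exactly on the image of the transitions of the $i$-th safe component under a fixed injection of $S_i$ into its states). Then $n_{\max}\le$ the number of states of $\mathcal{B}$.
   Context: An automaton is a tuple $(Q,\Sigma,q_{\mathrm{init}},\Delta,\Gamma,\mathrm{col},W)$ with finite state set, finite input alphabet $\Sigma$, initial state, transitions $\Delta\subseteq Q\times\Sigma\times Q$, output alphabet $\Gamma$, labelling $\mathrm{col}:\Delta\to\Gamma$, acceptance condition $W\subseteq\Gamma^\omega$. A run on $w=a_1a_2\cdots$ is a sequence $(q_0,a_1,q_1)(q_1,a_2,q_2)\cdots$ of transitions with $q_0=q_{\mathrm{init}}$, accepting if its label sequence is in $W$; $\mathcal{L}(\mathcal{A})$ is the set of words with an accepting run. With a finite colour set $C$ and $\Gamma=2^C$, generalised coBüchi means $W=\{x : \text{some } c\in C \text{ occurs in only finitely many letters of } x\}$; a coBüchi automaton is the case $C=\{1\}$, its coBüchi transitions being those labelled $\{1\}$. A resolver is a map $\sigma:\Sigma^+\to\Delta$ such that for every $w=a_0a_1\cdots$, $\sigma(a_0)\sigma(a_0a_1)\cdots$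 is a run on $w$, accepting whenever $w\in\mathcal{L}(\mathcal{A})$; history-deterministic means a resolver exists. $L$ is prefix-independent if for all $u\in\Sigma^*$, $w\in\Sigma^\omega$: $uw\in L\iff w\in L$. For a coBüchi automaton: $\mathcal{A}_{\mathrm{safe}}$ is obtained by deleting coBüchi transitions; a safe component is a strongly connected component of $\mathcal{A}_{\mathrm{safe}}$; the safe language of $q$ is the set of words with an infinite path from $q$ in $\mathcal{A}_{\mathrm{safe}}$; two states are equivalent if the automaton started from each recognises the same language. Semantically deterministic: $(q,a,p_1),(q,a,p_2)\in\Delta$ implies $p_1,p_2$ equivalent; normal form: transitions between different safe components are coBüchi transitions; safe deterministic: $\mathcal{A}_{\mathrm{safe}}$ deterministic; nice: all states reachable, semantically deterministic, normal form, safe deterministic. Safe centralised: equivalent states with inclusion-comparable safe languages lie in the same safe component; safe minimal: equivalent states with equal safe languages are equal. *)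

theory Defs
  imports Main
begin

text \<open>Automata over an explicit finite input alphabet Sig. The output alphabet is the type 'g; the labelling col is a
  total function on the transition type, only meaningful on trans.\<close>

record ('q, 'a, 'g) automaton =
  states :: "'q set"
  init   :: 'q
  trans  :: "('q \<times> 'a \<times> 'q) set"
  col    :: "('q \<times> 'a \<times> 'q) \<Rightarrow> 'g"
  acc    :: "(nat \<Rightarrow> 'g) set"

definition is_automaton :: "'a set \<Rightarrow> ('q, 'a, 'g) automaton \<Rightarrow> bool" where
  "is_automaton Sig A \<longleftrightarrow> finite Sig \<and> finite (states A) \<and> init A \<in> states A
     \<and> trans A \<subseteq> states A \<times> Sig \<times> states A"

definition omega_words :: "'a set \<Rightarrow> (nat \<Rightarrow> 'a) set" where
  "omega_words Sig = {w. \<forall>i. w i \<in> Sig}"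

definition is_run :: "('q, 'a, 'g) automaton \<Rightarrow> (nat \<Rightarrow> 'a) \<Rightarrow> (nat \<Rightarrow> 'q \<times> 'a \<times> 'q) \<Rightarrow> bool" where
  "is_run A w r \<longleftrightarrow> fst (r 0) = init A \<and>
     (\<forall>i. r i \<in> trans A \<and> fst (snd (r i)) = w i \<and> snd (snd (r i)) = fst (r (Suc i)))"

definition accepting_run :: "('q, 'a, 'g) automaton \<Rightarrow> (nat \<Rightarrow> 'q \<times> 'a \<times> 'q) \<Rightarrow> bool" where
  "accepting_run A r \<longleftrightarrow> (\<lambda>i. col A (r i)) \<in> acc A"

definition lang :: "'a set \<Rightarrow> ('q, 'a, 'g) automaton \<Rightarrow> (nat \<Rightarrow> 'a) set" where
  "lang Sig A = {w \<in> omega_words Sig. \<exists>r. is_run A w r \<and> accepting_run A r}"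

definition wprefix :: "nat \<Rightarrow> (nat \<Rightarrow> 'a) \<Rightarrow> 'a list" where
  "wprefix n w = map w [0..<n]"

text \<open>Resolver: sigma applied to the nonempty prefixes a_0, a_0 a_1, ...\<close>
definition is_resolver :: "'a set \<Rightarrow> ('q, 'a, 'g) automaton \<Rightarrow> ('a list \<Rightarrow> 'q \<times> 'a \<times> 'q) \<Rightarrow> bool" where
  "is_resolver Sig A \<sigma> \<longleftrightarrow> (\<forall>w \<in> omega_words Sig.
      is_run A w (\<lambda>i. \<sigma> (wprefix (Suc i) w)) \<and>
      (w \<in> lang Sig A \<longrightarrow> accepting_run A (\<lambda>i. \<sigma> (wprefix (Suc i) w))))"

definition history_deterministic :: "'a set \<Rightarrow> ('q, 'a, 'g) automaton \<Rightarrow> bool" where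
  "history_deterministic Sig A \<longleftrightarrow> (\<exists>\<sigma>. is_resolver Sig A \<sigma>)"

definition conc :: "'a list \<Rightarrow> (nat \<Rightarrow> 'a) \<Rightarrow> (nat \<Rightarrow> 'a)" where
  "conc u w = (\<lambda>i. if i < length u then u ! i else w (i - length u))"

definition prefix_independent :: "'a set \<Rightarrow> (nat \<Rightarrow> 'a) set \<Rightarrow> bool" where
  "prefix_independent Sig L \<longleftrightarrow>
     (\<forall>u w. set u \<subseteq> Sig \<longrightarrow> w \<in> omega_words Sig \<longrightarrow> (conc u w \<in> L \<longleftrightarrow> w \<in> L))"

definition gen_cobuchi_cond :: "'c set \<Rightarrow> (nat \<Rightarrow> 'c set) set" where
  "gen_cobuchi_cond C = {x. \<exists>c \<in> C. finite {i. c \<in> x i}}"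

definition is_gen_cobuchi :: "'a set \<Rightarrow> 'c set \<Rightarrow> ('q, 'a, 'c set) automaton \<Rightarrow> bool" where
  "is_gen_cobuchi Sig C A \<longleftrightarrow> is_automaton Sig A \<and> finite C
     \<and> (\<forall>t \<in> trans A. col A t \<subseteq> C) \<and> acc A = gen_cobuchi_cond C"

definition is_cobuchi :: "'a set \<Rightarrow> ('q, 'a, nat set) automaton \<Rightarrow> bool" where
  "is_cobuchi Sig A \<longleftrightarrow> is_gen_cobuchi Sig {1} A"

definition cobuchi_trans :: "('q, 'a, nat set) automaton \<Rightarrow> ('q \<times> 'a \<times> 'q) set" where
  "cobuchi_trans A = {t \<in> trans A. col A t = {1}}"

definition safe_trans :: "('q, 'a, nat set) automaton \<Rightarrow> ('q \<times> 'a \<times> 'q) set" where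
  "safe_trans A = trans A - cobuchi_trans A"

definition safe_edges :: "('q, 'a, nat set) automaton \<Rightarrow> ('q \<times> 'q) set" where
  "safe_edges A = {(p, q). \<exists>a. (p, a, q) \<in> safe_trans A}"

definition safe_scc :: "('q, 'a, nat set) automaton \<Rightarrow> 'q \<Rightarrow> 'q set" where
  "safe_scc A q = {p \<in> states A. (q, p) \<in> (safe_edges A)\<^sup>* \<and> (p, q) \<in> (safe_edges A)\<^sup>*}"

definition safe_components :: "('q, 'a, nat set) automaton \<Rightarrow> 'q set set" where
  "safe_components A = safe_scc A ` states A"

definition safe_lang :: "'a set \<Rightarrow> ('q, 'a, nat set) automaton \<Rightarrow> 'q \<Rightarrow> (nat \<Rightarrow> 'a) set" where
  "safe_lang Sig A q = {w \<in> omega_words Sig. \<exists>qs. qs 0 = q \<and>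
      (\<forall>i. (qs i, w i, qs (Suc i)) \<in> safe_trans A)}"

definition equiv_states :: "'a set \<Rightarrow> ('q, 'a, 'g) automaton \<Rightarrow> 'q \<Rightarrow> 'q \<Rightarrow> bool" where
  "equiv_states Sig A p q \<longleftrightarrow> lang Sig (A\<lparr>init := p\<rparr>) = lang Sig (A\<lparr>init := q\<rparr>)"

definition all_reachable :: "('q, 'a, 'g) automaton \<Rightarrow> bool" where
  "all_reachable A \<longleftrightarrow> (\<forall>q \<in> states A. (init A, q) \<in> {(p, p'). \<exists>a. (p, a, p') \<in> trans A}\<^sup>*)"

definition semantically_deterministic :: "'a set \<Rightarrow> ('q, 'a, 'g) automaton \<Rightarrow> bool" where
  "semantically_deterministic Sig A \<longleftrightarrow>
     (\<forall>q a p1 p2. (q, a, p1) \<in> trans A \<longrightarrow> (q, a, p2) \<in> trans A \<longrightarrow> equiv_states Sig A p1 p2)"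

definition normal_form :: "('q, 'a, nat set) automaton \<Rightarrow> bool" where
  "normal_form A \<longleftrightarrow> (\<forall>p a q. (p, a, q) \<in> trans A \<longrightarrow> safe_scc A p \<noteq> safe_scc A q
      \<longrightarrow> (p, a, q) \<in> cobuchi_trans A)"

definition safe_deterministic :: "('q, 'a, nat set) automaton \<Rightarrow> bool" where
  "safe_deterministic A \<longleftrightarrow>
     (\<forall>q a p1 p2. (q, a, p1) \<in> safe_trans A \<longrightarrow> (q, a, p2) \<in> safe_trans A \<longrightarrow> p1 = p2)"

definition nice :: "'a set \<Rightarrow> ('q, 'a, nat set) automaton \<Rightarrow> bool" where
  "nice Sig A \<longleftrightarrow> all_reachable A \<and> semantically_deterministic Sig A
     \<and> normal_form A \<and> safe_deterministic A"

definition safe_centralised :: "'a set \<Rightarrow> ('q, 'a, nat set) automaton \<Rightarrow> bool" where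
  "safe_centralised Sig A \<longleftrightarrow> (\<forall>p \<in> states A. \<forall>q \<in> states A.
     equiv_states Sig A p q \<longrightarrow>
     (safe_lang Sig A p \<subseteq> safe_lang Sig A q \<or> safe_lang Sig A q \<subseteq> safe_lang Sig A p)
     \<longrightarrow> safe_scc A p = safe_scc A q)"

definition safe_minimal :: "'a set \<Rightarrow> ('q, 'a, nat set) automaton \<Rightarrow> bool" where
  "safe_minimal Sig A \<longleftrightarrow> (\<forall>p \<in> states A. \<forall>q \<in> states A.
     equiv_states Sig A p q \<longrightarrow> safe_lang Sig A p = safe_lang Sig A q \<longrightarrow> p = q)"

end

theory Submission
  imports Defs
begin

text \<open>Let S be a largest safe component of Amin; if it has a single state the bound holds because
  B has a state. All states of Amin recognise L, so B's resolver accepts every word that has a safe run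
  inside S, and a Baire-category argument yields a prefix u and a colour c of B that B's resolver
  never meets again while Amin continues with safe words from some state s1 of S. The c-free
  transitions used there form a graph whose infinite paths, read after u, are words of L by prefix
  independence; the same argument applied to Amin's resolver on these words yields a further prefix
  y after which Amin's resolver only takes safe transitions. Starting from a state of S whose safe
  language is inclusion-maximal, safe centralisation and safe minimality force Amin's resolver back
  into that very state, and safe determinism then shows that the safe language of every state of S
  is the c-free language of some state of B. By safe minimality these languages are pairwise
  distinct, so S injects into the states of B.\<close>

section \<open>Words and paths in labelled graphs\<close>

lemma length_wprefix [simp]: "length (wprefix k w) = k"
  by (simp add: wprefix_def)

lemma wprefix_0 [simp]: "wprefix 0 w = []"
  by (simp add: wprefix_def)

lemma wprefix_Suc: "wprefix (Suc i) w = wprefix i w @ [w i]"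
  by (simp add: wprefix_def)

lemma wprefix_conc: "wprefix (length h + k) (conc h z) = h @ wprefix k z"
  by (rule nth_equalityI) (auto simp: wprefix_def conc_def nth_append)

lemma wprefix_conc_length [simp]: "wprefix (length h) (conc h z) = h"
  using wprefix_conc[of h 0 z] by simp

lemma conc_Cons: "conc (a # y) z = case_nat a (conc y z)"
  by (auto simp: conc_def fun_eq_iff split: nat.split)

lemma conc_in_omega_words:
  "set u \<subseteq> Sig \<Longrightarrow> z \<in> omega_words Sig \<Longrightarrow> conc u z \<in> omega_words Sig"
  by (auto simp: omega_words_def conc_def)

definition walk :: "('n \<times> 'a \<times> 'n) set \<Rightarrow> (nat \<Rightarrow> 'n) \<Rightarrow> (nat \<Rightarrow> 'a) \<Rightarrow> bool" where
  "walk G ns z \<longleftrightarrow> (\<forall>i. (ns i, z i, ns (Suc i)) \<in> G)"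

definition inf_path :: "('n \<times> 'a \<times> 'n) set \<Rightarrow> 'n \<Rightarrow> (nat \<Rightarrow> 'a) \<Rightarrow> bool" where
  "inf_path G n z \<longleftrightarrow> (\<exists>ns. ns 0 = n \<and> walk G ns z)"

inductive fin_path :: "('n \<times> 'a \<times> 'n) set \<Rightarrow> 'n \<Rightarrow> 'a list \<Rightarrow> 'n \<Rightarrow> bool" for G where
  fin_path_Nil: "fin_path G n [] n"
| fin_path_Cons: "(n, a, n') \<in> G \<Longrightarrow> fin_path G n' y m \<Longrightarrow> fin_path G n (a # y) m"

lemma fin_path_append: "fin_path G n y m \<Longrightarrow> fin_path G m y' m' \<Longrightarrow> fin_path G n (y @ y') m'"
  by (induction rule: fin_path.induct) (auto intro: fin_path.intros)

lemma fin_path_snoc: "fin_path G n y m \<Longrightarrow> (m, a, m') \<in> G \<Longrightarrow> fin_path G n (y @ [a]) m'"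
  by (erule fin_path_append) (auto intro: fin_path.intros)

lemma fin_path_closed: "fin_path G n y m \<Longrightarrow> G \<subseteq> P \<times> UNIV \<times> P \<Longrightarrow> n \<in> P \<Longrightarrow> m \<in> P"
  by (induction rule: fin_path.induct) auto

lemma fin_path_labels: "fin_path G n y m \<Longrightarrow> G \<subseteq> UNIV \<times> Sig \<times> UNIV \<Longrightarrow> set y \<subseteq> Sig"
  by (induction rule: fin_path.induct) auto

lemma inf_path_labels: "inf_path G n z \<Longrightarrow> G \<subseteq> UNIV \<times> Sig \<times> UNIV \<Longrightarrow> z \<in> omega_words Sig"
  by (auto simp: inf_path_def walk_def omega_words_def)

lemma fin_path_wprefix: "walk G ns z \<Longrightarrow> fin_path G (ns 0) (wprefix k z) (ns k)"
  by (induction k) (auto simp: walk_def wprefix_Suc intro: fin_path_snoc fin_path.intros)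

lemma inf_path_wprefix:
  assumes "inf_path G n z"
  obtains m where "fin_path G n (wprefix k z) m"
  using assms fin_path_wprefix unfolding inf_path_def by blast

lemma inf_path_conc: "fin_path G n y m \<Longrightarrow> inf_path G m z \<Longrightarrow> inf_path G n (conc y z)"
proof (induction rule: fin_path.induct)
  case (fin_path_Cons n a n' y m)
  then obtain ns where "ns 0 = n'" "walk G ns (conc y z)"
    by (auto simp: inf_path_def)
  with fin_path_Cons.hyps(1) have "walk G (case_nat n ns) (conc (a # y) z)"
    by (auto simp: walk_def conc_Cons split: nat.split)
  then show ?case
    by (auto simp: inf_path_def intro!: exI[of _ "case_nat n ns"])
qed (simp add: conc_def)

lemma fin_path_prefix_property:
  assumes "\<And>z i. inf_path G n z \<Longrightarrow> P (wprefix (Suc i) z)"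
    and "fin_path G n x m" "inf_path G m z" "x \<noteq> []"
  shows "P x"
proof -
  have "P (wprefix (Suc (length x - 1)) (conc x z))"
    by (rule assms(1)[OF inf_path_conc[OF assms(2,3)]])
  moreover have "Suc (length x - 1) = length x"
    using \<open>x \<noteq> []\<close> by simp
  ultimately show ?thesis
    by simp
qed

lemma walk_splice:
  assumes "walk G ns z" "walk G ms z'" "ms 0 = ns m"
  shows "walk G (\<lambda>i. if i < m then ns i else ms (i - m)) (conc (wprefix m z) z')"
  unfolding walk_def
proof
  fix i
  show "((if i < m then ns i else ms (i - m)), conc (wprefix m z) z' i,
      (if Suc i < m then ns (Suc i) else ms (Suc i - m))) \<in> G"
  proof (cases "i < m")
    case True
    then consider "Suc i < m" | "Suc i = m" by linarith
    then show ?thesis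
      using True assms by cases (auto simp: walk_def conc_def wprefix_def)
  next
    case False
    then have "Suc i - m = Suc (i - m)" by simp
    with False show ?thesis
      using assms(2) by (simp add: walk_def conc_def wprefix_def)
  qed
qed

lemma inf_path_if_successors:
  assumes succ: "\<And>x. x \<in> S \<Longrightarrow> \<exists>a y. (x, a, y) \<in> G \<and> y \<in> S" and "s \<in> S"
  shows "\<exists>z. inf_path G s z"
proof -
  have "\<exists>ns. \<forall>i. (ns i \<in> S \<and> (i = 0 \<longrightarrow> ns i = s)) \<and> (\<exists>a. (ns i, a, ns (Suc i)) \<in> G)"
    by (rule dependent_nat_choice) (use succ \<open>s \<in> S\<close> in blast)+
  then obtain ns where ns: "\<And>i. ns i \<in> S \<and> (i = 0 \<longrightarrow> ns i = s) \<and> (\<exists>a. (ns i, a, ns (Suc i)) \<in> G)"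
    by blast
  then have "walk G ns (\<lambda>i. SOME a. (ns i, a, ns (Suc i)) \<in> G)"
    unfolding walk_def by (metis (mono_tags, lifting) someI_ex)
  with ns[of 0] show ?thesis
    by (auto simp: inf_path_def)
qed

section \<open>Avoiding a colour on all continuations\<close>

lemma diagonal_limit:
  fixes X :: "nat \<Rightarrow> nat \<Rightarrow> 'b" and M :: "nat \<Rightarrow> nat"
  assumes M: "\<And>k. M k < M (Suc k)" and agree: "\<And>k i. i < M k \<Longrightarrow> X (Suc k) i = X k i"
  obtains Xl where "\<And>k i. i < M k \<Longrightarrow> Xl i = X k i"
proof
  have mono: "strict_mono M"
    using M by (simp add: strict_mono_Suc_iff)
  have later: "X k' i = X k i" if "k \<le> k'" "i < M k" for k k' i
    using that(1)
  proof (induction k' rule: dec_induct)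
    case (step k')
    have "M k \<le> M k'"
      using strict_mono_less_eq[OF mono] step.hyps(1) by blast
    with step.IH that(2) show ?case
      using agree[of i k'] by simp
  qed simp
  fix k i assume "i < M k"
  moreover have "i < M (Suc i)"
    using strict_mono_imp_increasing[OF mono, of "Suc i"] by simp
  ultimately show "X (Suc i) i = X k i"
    using later[of k "max k (Suc i)" i] later[of "Suc i" "max k (Suc i)" i] by simp
qed

lemma fair_enumeration:
  assumes "finite J" "J \<noteq> {}"
  obtains f :: "nat \<Rightarrow> 'c" where "\<And>k. f k \<in> J" "\<And>j. j \<in> J \<Longrightarrow> infinite {k. f k = j}"
proof -
  obtain js where js: "set js = J"
    using finite_list[OF assms(1)] by blast
  define f where "f k = js ! (k mod length js)" for k
  have len: "length js > 0"
    using js assms(2) by auto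
  have "infinite {k. f k = j}" if "j \<in> J" for j
  proof -
    obtain t where t: "t < length js" "js ! t = j"
      using js \<open>j \<in> J\<close> by (auto simp: in_set_conv_nth)
    have "inj (\<lambda>b. t + length js * b)"
      using len by (auto intro: injI)
    moreover have "range (\<lambda>b. t + length js * b) \<subseteq> {k. f k = j}"
      using t by (auto simp: f_def)
    ultimately show ?thesis
      by (meson finite_imageD finite_subset infinite_UNIV_nat)
  qed
  moreover have "f k \<in> J" for k
    unfolding f_def js[symmetric] using len by simp
  ultimately show ?thesis
    using that by blast
qed

lemma walk_limit:
  assumes M: "\<And>k. M k < M (Suc k)" and walks: "\<And>k. N k 0 = n0" "\<And>k. walk G (N k) (Z k)"
    and agree: "\<And>k i. i < M k \<Longrightarrow> Z (Suc k) i = Z k i \<and> N (Suc k) i = N k i"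
  obtains zl where "inf_path G n0 zl" "\<And>k i. i < M k \<Longrightarrow> zl i = Z k i"
proof -
  obtain lim where lim: "\<And>k i. i < M k \<Longrightarrow> lim i = (Z k i, N k i)"
    using diagonal_limit[of M "\<lambda>k i. (Z k i, N k i)", OF M] agree by auto
  have M_ge: "k \<le> M k" for k
    using strict_mono_imp_increasing M by (simp add: strict_mono_Suc_iff)
  define zl nl where "zl i = fst (lim i)" and "nl i = snd (lim i)" for i
  have "walk G nl zl"
    unfolding walk_def
  proof
    fix i
    have "Suc i < M (Suc (Suc i))"
      using M_ge[of "Suc (Suc i)"] by simp
    then show "(nl i, zl i, nl (Suc i)) \<in> G"
      using walks(2)[of "Suc (Suc i)"] lim[of "Suc i" "Suc (Suc i)"] lim[of i "Suc (Suc i)"]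
      by (simp add: walk_def zl_def nl_def)
  qed
  moreover have "nl 0 = n0"
    using lim[of 0 1] M_ge[of 1] walks(1)[of 1] by (simp add: nl_def)
  ultimately have "inf_path G n0 zl"
    by (auto simp: inf_path_def)
  moreover have "zl i = Z k i" if "i < M k" for k i
    using lim[OF that] by (simp add: zl_def)
  ultimately show ?thesis
    using that by blast
qed

lemma walk_extend:
  assumes dense: "\<And>y n. fin_path G n0 y n \<Longrightarrow> \<exists>z i. inf_path G n z \<and> j \<in> F (y @ wprefix (Suc i) z)"
    and "ns 0 = n0" "walk G ns z"
  obtains z' ns' m' where "m < m'" "ns' 0 = n0" "walk G ns' z'"
    "\<And>i. i < m \<Longrightarrow> z' i = z i \<and> ns' i = ns i" "j \<in> F (wprefix m' z')"
proof -
  have "fin_path G n0 (wprefix m z) (ns m)"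
    using fin_path_wprefix[OF \<open>walk G ns z\<close>] \<open>ns 0 = n0\<close> by simp
  then obtain z'' i where "inf_path G (ns m) z''" and hit: "j \<in> F (wprefix m z @ wprefix (Suc i) z'')"
    using dense by blast
  then obtain ms where "ms 0 = ns m" "walk G ms z''"
    by (auto simp: inf_path_def)
  define z' where "z' = conc (wprefix m z) z''"
  define ns' where "ns' i = (if i < m then ns i else ms (i - m))" for i
  have "walk G ns' z'"
    unfolding ns'_def z'_def by (rule walk_splice) fact+
  moreover have "ns' 0 = n0"
    using \<open>ns 0 = n0\<close> \<open>ms 0 = ns m\<close> by (simp add: ns'_def)
  moreover have "z' i = z i \<and> ns' i = ns i" if "i < m" for i
    using that by (simp add: z'_def ns'_def conc_def wprefix_def)
  moreover have "wprefix (m + Suc i) z' = wprefix m z @ wprefix (Suc i) z''"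
    using wprefix_conc[of "wprefix m z" "Suc i" z''] by (simp add: z'_def)
  ultimately show ?thesis
    using that[of "m + Suc i"] hit by simp
qed

lemma infinitely_many_hits:
  fixes M :: "nat \<Rightarrow> nat"
  assumes M: "\<And>k. M k < M (Suc k)" and "infinite K" and hits: "\<And>k. k \<in> K \<Longrightarrow> Q (M (Suc k))"
  shows "infinite {i. Q (Suc i)}"
proof
  assume fin: "finite {i. Q (Suc i)}"
  have "strict_mono (\<lambda>k. M (Suc k) - 1)"
    unfolding strict_mono_Suc_iff
  proof
    fix k
    show "M (Suc k) - 1 < M (Suc (Suc k)) - 1"
      using M[of k] M[of "Suc k"] by linarith
  qed
  then have "infinite ((\<lambda>k. M (Suc k) - 1) ` K)"
    using \<open>infinite K\<close> finite_imageD strict_mono_imp_inj_on by blast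
  moreover have "Suc (M (Suc k) - 1) = M (Suc k)" for k
    using M[of k] by simp
  then have "(\<lambda>k. M (Suc k) - 1) ` K \<subseteq> {i. Q (Suc i)}"
    using hits by auto
  ultimately show False
    using fin finite_subset by blast
qed

lemma chase_colours:
  fixes G :: "('n \<times> 'a \<times> 'n) set" and F :: "'a list \<Rightarrow> 'c set" and jj :: "nat \<Rightarrow> 'c"
  assumes dense: "\<And>k y n. fin_path G n0 y n \<Longrightarrow> \<exists>z i. inf_path G n z \<and> jj k \<in> F (y @ wprefix (Suc i) z)"
    and "inf_path G n0 z0"
  obtains N Z M where "\<And>k. N k 0 = n0" "\<And>k. walk G (N k) (Z k)" "\<And>k. M k < M (Suc k)"
    "\<And>k i. i < M k \<Longrightarrow> Z (Suc k) i = Z k i \<and> N (Suc k) i = N k i"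
    "\<And>k. jj k \<in> F (wprefix (M (Suc k)) (Z (Suc k)))"
proof -
  \<comment> \<open>A stage (z, ns, m) is a walk from n0 whose first m letters and nodes stay fixed from then on.\<close>
  define run where "run = (\<lambda>(z, ns, m::nat). ns 0 = n0 \<and> walk G ns z)"
  define extends where "extends = (\<lambda>k (z, ns :: nat \<Rightarrow> 'n, m) (z', ns', m').
      m < m' \<and> (\<forall>i<m. z' i = z i \<and> ns' i = ns i) \<and> jj k \<in> F (wprefix m' z'))"
  have "\<exists>r'. run r' \<and> extends k r r'" if run_r: "run r" for k r
  proof -
    obtain z ns m where r: "r = (z, ns, m)" "ns 0 = n0" "walk G ns z"
      using run_r by (cases r) (auto simp: run_def)
    obtain z' ns' m' where "m < m'" "ns' 0 = n0" "walk G ns' z'"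
      "\<And>i. i < m \<Longrightarrow> z' i = z i \<and> ns' i = ns i" "jj k \<in> F (wprefix m' z')"
      using walk_extend[OF dense r(2,3)] by blast
    then show ?thesis
      by (auto simp: r run_def extends_def intro!: exI[of _ "(z', ns', m')"])
  qed
  moreover have "\<exists>r. run r"
    using \<open>inf_path G n0 z0\<close> by (auto simp: run_def inf_path_def)
  ultimately obtain r where r: "\<And>k. run (r k) \<and> extends k (r k) (r (Suc k))"
    using dependent_nat_choice[of "\<lambda>_. run" extends] by blast
  show ?thesis
    by (rule that[of "\<lambda>k. fst (snd (r k))" "\<lambda>k. fst (r k)" "\<lambda>k. snd (snd (r k))"])
      (use r in \<open>simp_all add: run_def extends_def case_prod_beta\<close>)
qed

text \<open>A Baire-category argument: if every colour of J can be met again after every finite path,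
  chasing the colours in a fair order yields in the limit a path meeting each of them infinitely
  often.\<close>

lemma recurrent_path:
  fixes G :: "('n \<times> 'a \<times> 'n) set" and F :: "'a list \<Rightarrow> 'c set"
  assumes "finite J" "J \<noteq> {}"
    and dense: "\<And>j y n. j \<in> J \<Longrightarrow> fin_path G n0 y n \<Longrightarrow>
        \<exists>z i. inf_path G n z \<and> j \<in> F (y @ wprefix (Suc i) z)"
  obtains z where "inf_path G n0 z" "\<And>j. j \<in> J \<Longrightarrow> infinite {i. j \<in> F (wprefix (Suc i) z)}"
proof -
  obtain jj :: "nat \<Rightarrow> 'c" where jj: "\<And>k. jj k \<in> J" "\<And>j. j \<in> J \<Longrightarrow> infinite {k. jj k = j}"
    using fair_enumeration[OF assms(1,2)] by blast
  have dense_jj: "\<And>k y n. fin_path G n0 y n \<Longrightarrow> \<exists>z i. inf_path G n z \<and> jj k \<in> F (y @ wprefix (Suc i) z)"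
    using dense jj(1) by blast
  obtain z0 where "inf_path G n0 z0"
    using dense_jj[OF fin_path_Nil] by blast
  show ?thesis
  proof (rule chase_colours[OF dense_jj \<open>inf_path G n0 z0\<close>])
    fix N Z M
    assume walks: "\<And>k. N k 0 = n0" "\<And>k. walk G (N k) (Z k)" and M: "\<And>k. M k < M (Suc k)"
      and agree: "\<And>k i. i < M k \<Longrightarrow> Z (Suc k) i = Z k i \<and> N (Suc k) i = N k i"
      and chased: "\<And>k. jj k \<in> F (wprefix (M (Suc k)) (Z (Suc k)))"
    obtain zl where path: "inf_path G n0 zl" and lim: "\<And>k i. i < M k \<Longrightarrow> zl i = Z k i"
      using walk_limit[where M = M and N = N and Z = Z, OF M walks agree] by blast
    have hit: "jj k \<in> F (wprefix (M (Suc k)) zl)" for k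
    proof -
      have "wprefix (M (Suc k)) zl = wprefix (M (Suc k)) (Z (Suc k))"
        using lim[of _ "Suc k"] by (simp add: wprefix_def)
      with chased[of k] show ?thesis
        by simp
    qed
    have "infinite {i. j \<in> F (wprefix (Suc i) zl)}" if "j \<in> J" for j
      by (rule infinitely_many_hits[where Q = "\<lambda>m. j \<in> F (wprefix m zl)" and M = M, OF M jj(2)[OF that]])
        (use hit in auto)
    with path that show ?thesis
      by blast
  qed
qed

lemma avoided_colour:
  fixes G :: "('n \<times> 'a \<times> 'n) set" and F :: "'a list \<Rightarrow> 'c set"
  assumes "finite J"
    and accepting: "\<And>z. inf_path G n0 z \<Longrightarrow> (\<lambda>i. F (wprefix (Suc i) z)) \<in> gen_cobuchi_cond J"
    and "inf_path G n0 z0"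
  obtains y n1 j where "fin_path G n0 y n1" "j \<in> J"
    "\<And>z i. inf_path G n1 z \<Longrightarrow> j \<notin> F (y @ wprefix (Suc i) z)"
proof (rule ccontr)
  assume "\<not> thesis"
  with that have dense: "\<And>j y n. j \<in> J \<Longrightarrow> fin_path G n0 y n \<Longrightarrow>
      \<exists>z i. inf_path G n z \<and> j \<in> F (y @ wprefix (Suc i) z)"
    by blast
  have "J \<noteq> {}"
    using accepting[OF \<open>inf_path G n0 z0\<close>] by (auto simp: gen_cobuchi_cond_def)
  then obtain z where "inf_path G n0 z" "\<And>j. j \<in> J \<Longrightarrow> infinite {i. j \<in> F (wprefix (Suc i) z)}"
    using recurrent_path[OF \<open>finite J\<close> _ dense] by blast
  with accepting show False
    by (auto simp: gen_cobuchi_cond_def)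
qed

section \<open>Languages of automata and their resolvers\<close>

lemma gen_cobuchi_cond_shift:
  assumes "x \<in> gen_cobuchi_cond C"
  shows "(\<lambda>i. x (i + m)) \<in> gen_cobuchi_cond C"
proof -
  obtain c where c: "c \<in> C" "finite {i. c \<in> x i}"
    using assms unfolding gen_cobuchi_cond_def by blast
  have "finite ((\<lambda>i. i + m) -` {i. c \<in> x i})"
    by (rule finite_vimageI[OF c(2)]) (simp add: inj_on_def)
  moreover have "(\<lambda>i. i + m) -` {i. c \<in> x i} = {i. c \<in> x (i + m)}"
    by (simp add: vimage_def)
  ultimately have "finite {i. c \<in> x (i + m)}"
    by simp
  with c(1) show ?thesis
    unfolding gen_cobuchi_cond_def by blast
qed

lemma gen_cobuchi_cond_Cons:
  assumes "x \<in> gen_cobuchi_cond C"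
  shows "case_nat a x \<in> gen_cobuchi_cond C"
proof -
  obtain c where c: "c \<in> C" "finite {i. c \<in> x i}"
    using assms by (auto simp: gen_cobuchi_cond_def)
  have "{i. c \<in> case_nat a x i} \<subseteq> insert 0 (Suc ` {i. c \<in> x i})"
  proof
    fix i assume "i \<in> {i. c \<in> case_nat a x i}"
    then show "i \<in> insert 0 (Suc ` {i. c \<in> x i})"
      by (cases i) auto
  qed
  then have "finite {i. c \<in> case_nat a x i}"
    by (rule finite_subset) (simp add: c(2))
  with c(1) show ?thesis
    by (auto simp: gen_cobuchi_cond_def)
qed

lemma in_lang_from_iff:
  "w \<in> lang Sig (A\<lparr>init := q\<rparr>) \<longleftrightarrow> w \<in> omega_words Sig \<and>
    (\<exists>r. fst (r 0) = q \<and> (\<forall>i. r i \<in> trans A \<and> fst (snd (r i)) = w i \<and> snd (snd (r i)) = fst (r (Suc i)))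
       \<and> (\<lambda>i. col A (r i)) \<in> acc A)"
  by (simp add: lang_def is_run_def accepting_run_def)

lemma lang_from_Cons:
  assumes acc: "acc A = gen_cobuchi_cond C" and t: "(p, a, q) \<in> trans A" and "a \<in> Sig"
    and w: "w \<in> lang Sig (A\<lparr>init := q\<rparr>)"
  shows "conc [a] w \<in> lang Sig (A\<lparr>init := p\<rparr>)"
proof -
  obtain r where r: "w \<in> omega_words Sig" "fst (r 0) = q"
    "\<forall>i. r i \<in> trans A \<and> fst (snd (r i)) = w i \<and> snd (snd (r i)) = fst (r (Suc i))"
    "(\<lambda>i. col A (r i)) \<in> gen_cobuchi_cond C"
    using w acc by (auto simp: in_lang_from_iff)
  have "(\<lambda>i. col A (case_nat (p, a, q) r i)) = case_nat (col A (p, a, q)) (\<lambda>i. col A (r i))"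
    by (rule ext) (simp split: nat.split)
  then have "(\<lambda>i. col A (case_nat (p, a, q) r i)) \<in> acc A"
    using gen_cobuchi_cond_Cons[OF r(4)] acc by simp
  moreover have "case_nat (p, a, q) r i \<in> trans A \<and> fst (snd (case_nat (p, a, q) r i)) = conc [a] w i
      \<and> snd (snd (case_nat (p, a, q) r i)) = fst (case_nat (p, a, q) r (Suc i))" for i
    using r(2,3) t by (cases i) (auto simp: conc_def)
  moreover have "conc [a] w \<in> omega_words Sig"
    using conc_in_omega_words[of "[a]" Sig w] \<open>a \<in> Sig\<close> r(1) by simp
  ultimately show ?thesis
    using r(2) by (auto simp: in_lang_from_iff intro!: exI[of _ "case_nat (p, a, q) r"])
qed

lemma lang_from_Cons_tail:
  assumes acc: "acc A = gen_cobuchi_cond C" and w: "w \<in> omega_words Sig"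
    and aw: "conc [a] w \<in> lang Sig (A\<lparr>init := p\<rparr>)"
  obtains q where "(p, a, q) \<in> trans A" "w \<in> lang Sig (A\<lparr>init := q\<rparr>)"
proof -
  obtain r where r: "fst (r 0) = p"
    "\<forall>i. r i \<in> trans A \<and> fst (snd (r i)) = conc [a] w i \<and> snd (snd (r i)) = fst (r (Suc i))"
    "(\<lambda>i. col A (r i)) \<in> gen_cobuchi_cond C"
    using aw acc by (auto simp: in_lang_from_iff)
  have "r 0 = (p, a, fst (r 1))"
    using r(1) r(2)[rule_format, of 0] by (auto simp: prod_eq_iff conc_def)
  with r(2) have "(p, a, fst (r 1)) \<in> trans A"
    by metis
  moreover have "(\<lambda>i. col A (r (i + 1))) \<in> acc A"
    using gen_cobuchi_cond_shift[OF r(3), of 1] acc by simp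
  then have "w \<in> lang Sig (A\<lparr>init := fst (r 1)\<rparr>)"
    using w r(2) by (auto simp: in_lang_from_iff conc_def intro!: exI[of _ "\<lambda>i. r (Suc i)"])
  ultimately show ?thesis
    using that by blast
qed

lemma prefix_independent_Cons:
  "prefix_independent Sig L \<Longrightarrow> a \<in> Sig \<Longrightarrow> w \<in> omega_words Sig \<Longrightarrow> conc [a] w \<in> L \<longleftrightarrow> w \<in> L"
  by (simp add: prefix_independent_def)

definition step_rel :: "('q, 'a, 'g) automaton \<Rightarrow> ('q \<times> 'q) set" where
  "step_rel A = {(p, p'). \<exists>a. (p, a, p') \<in> trans A}"

lemma lang_from_reachable_subset:
  assumes acc: "acc A = gen_cobuchi_cond C" and trans: "trans A \<subseteq> states A \<times> Sig \<times> states A"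
    and pi: "prefix_independent Sig L" and "lang Sig A \<subseteq> L"
    and "(init A, q) \<in> (step_rel A)\<^sup>*"
  shows "lang Sig (A\<lparr>init := q\<rparr>) \<subseteq> L"
  using \<open>(init A, q) \<in> (step_rel A)\<^sup>*\<close>
proof (induction rule: rtrancl_induct)
  case base
  then show ?case using \<open>lang Sig A \<subseteq> L\<close> by simp
next
  case (step p q)
  then obtain a where t: "(p, a, q) \<in> trans A"
    by (auto simp: step_rel_def)
  with trans have "a \<in> Sig" by auto
  show ?case
  proof
    fix w assume w: "w \<in> lang Sig (A\<lparr>init := q\<rparr>)"
    then have "conc [a] w \<in> L"
      using lang_from_Cons[OF acc t \<open>a \<in> Sig\<close>] step.IH by blast
    moreover have "w \<in> omega_words Sig"
      using w by (simp add: lang_def)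
    ultimately show "w \<in> L"
      using prefix_independent_Cons[OF pi \<open>a \<in> Sig\<close>] by blast
  qed
qed

lemma lang_from_reachable_eq:
  assumes acc: "acc A = gen_cobuchi_cond C" and trans: "trans A \<subseteq> states A \<times> Sig \<times> states A"
    and pi: "prefix_independent Sig L" and "lang Sig A = L" and "L \<subseteq> omega_words Sig"
    and sd: "semantically_deterministic Sig A"
    and "(init A, q) \<in> (step_rel A)\<^sup>*"
  shows "lang Sig (A\<lparr>init := q\<rparr>) = L"
proof
  show "lang Sig (A\<lparr>init := q\<rparr>) \<subseteq> L"
    by (rule lang_from_reachable_subset[OF acc trans pi _ \<open>(init A, q) \<in> (step_rel A)\<^sup>*\<close>])
      (simp add: \<open>lang Sig A = L\<close>)
  show "L \<subseteq> lang Sig (A\<lparr>init := q\<rparr>)"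
    using \<open>(init A, q) \<in> (step_rel A)\<^sup>*\<close>
  proof (induction rule: rtrancl_induct)
    case base
    then show ?case using \<open>lang Sig A = L\<close> by simp
  next
    case (step p q)
    then obtain a where t: "(p, a, q) \<in> trans A"
      by (auto simp: step_rel_def)
    with trans have "a \<in> Sig" by auto
    show ?case
    proof
      fix w assume "w \<in> L"
      with \<open>L \<subseteq> omega_words Sig\<close> have w: "w \<in> omega_words Sig" by blast
      with \<open>w \<in> L\<close> step.IH have "conc [a] w \<in> lang Sig (A\<lparr>init := p\<rparr>)"
        using prefix_independent_Cons[OF pi \<open>a \<in> Sig\<close>] by blast
      then obtain q' where "(p, a, q') \<in> trans A" "w \<in> lang Sig (A\<lparr>init := q'\<rparr>)"
        using lang_from_Cons_tail[OF acc w] by blast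
      moreover have "equiv_states Sig A q' q" if "(p, a, q') \<in> trans A"
        using sd that t by (auto simp: semantically_deterministic_def)
      ultimately show "w \<in> lang Sig (A\<lparr>init := q\<rparr>)"
        by (simp add: equiv_states_def)
    qed
  qed
qed

lemma inf_path_in_lang:
  assumes "acc A = gen_cobuchi_cond C" "c \<in> C"
    and G: "G \<subseteq> trans A" "\<And>t. t \<in> G \<Longrightarrow> c \<notin> col A t" "G \<subseteq> UNIV \<times> Sig \<times> UNIV"
    and "inf_path G q z"
  shows "z \<in> lang Sig (A\<lparr>init := q\<rparr>)"
proof -
  obtain ns where ns: "ns 0 = q" "walk G ns z"
    using \<open>inf_path G q z\<close> by (auto simp: inf_path_def)
  have "{i. c \<in> col A (ns i, z i, ns (Suc i))} = {}"
    using ns(2) G(2) by (auto simp: walk_def)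
  then have "finite {i. c \<in> col A (ns i, z i, ns (Suc i))}"
    by (metis finite.emptyI)
  with assms(1,2) have "(\<lambda>i. col A (ns i, z i, ns (Suc i))) \<in> acc A"
    by (auto simp: gen_cobuchi_cond_def)
  moreover have "z \<in> omega_words Sig"
    using inf_path_labels[OF \<open>inf_path G q z\<close> G(3)] .
  ultimately show ?thesis
    using ns G(1) by (auto simp: in_lang_from_iff walk_def intro!: exI[of _ "\<lambda>i. (ns i, z i, ns (Suc i))"])
qed

definition res_state :: "('q, 'a, 'g) automaton \<Rightarrow> ('a list \<Rightarrow> 'q \<times> 'a \<times> 'q) \<Rightarrow> 'a list \<Rightarrow> 'q" where
  "res_state A \<sigma> h = (if h = [] then init A else snd (snd (\<sigma> h)))"

lemma resolver_step:
  assumes \<sigma>: "is_resolver Sig A \<sigma>" and "set h \<subseteq> Sig" "a \<in> Sig"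
  shows "\<sigma> (h @ [a]) = (res_state A \<sigma> h, a, res_state A \<sigma> (h @ [a]))" and "\<sigma> (h @ [a]) \<in> trans A"
proof -
  define w where "w = conc (h @ [a]) (\<lambda>_. a)"
  have "w \<in> omega_words Sig"
    unfolding w_def using assms(2,3) by (intro conc_in_omega_words) (auto simp: omega_words_def)
  with \<sigma> have run: "is_run A w (\<lambda>i. \<sigma> (wprefix (Suc i) w))"
    by (simp add: is_resolver_def)
  have pre: "wprefix (length h) w = h" "wprefix (Suc (length h)) w = h @ [a]" "w (length h) = a"
    using wprefix_conc_length[of "h @ [a]"] by (auto simp: w_def wprefix_def conc_def nth_append)
  with run show "\<sigma> (h @ [a]) \<in> trans A"
    unfolding is_run_def by metis
  have "fst (\<sigma> (h @ [a])) = res_state A \<sigma> h"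
  proof (cases h rule: rev_exhaust)
    case Nil
    with run pre show ?thesis
      by (simp add: is_run_def res_state_def)
  next
    case (snoc h' b)
    with run[unfolded is_run_def] have "snd (snd (\<sigma> (wprefix (Suc (length h')) w))) = fst (\<sigma> (h @ [a]))"
      using pre(2) by (metis length_append_singleton)
    with pre(1) snoc show ?thesis
      by (simp add: res_state_def)
  qed
  moreover have "fst (snd (\<sigma> (h @ [a]))) = a"
    using run pre unfolding is_run_def by metis
  ultimately show "\<sigma> (h @ [a]) = (res_state A \<sigma> h, a, res_state A \<sigma> (h @ [a]))"
    by (simp add: res_state_def prod_eq_iff)
qed

lemma res_state_in_states:
  assumes "is_automaton Sig A" "is_resolver Sig A \<sigma>" "set h \<subseteq> Sig"
  shows "res_state A \<sigma> h \<in> states A"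
proof (cases h rule: rev_exhaust)
  case (snoc h' a)
  with resolver_step[OF assms(2), of h' a] assms show ?thesis
    by (auto simp: is_automaton_def)
qed (use assms in \<open>simp add: is_automaton_def res_state_def\<close>)

lemma res_state_reachable:
  assumes "is_resolver Sig A \<sigma>" "set h \<subseteq> Sig"
  shows "(init A, res_state A \<sigma> h) \<in> (step_rel A)\<^sup>*"
  using assms(2)
proof (induction h rule: rev_induct)
  case (snoc a h)
  with resolver_step[OF assms(1), of h a]
  have "(res_state A \<sigma> h, res_state A \<sigma> (h @ [a])) \<in> step_rel A"
    by (auto simp: step_rel_def)
  with snoc show ?case
    by (auto intro: rtrancl_into_rtrancl)
qed (simp add: res_state_def)

lemma resolver_inf_path:
  assumes \<sigma>: "is_resolver Sig A \<sigma>" and "set h \<subseteq> Sig" "z \<in> omega_words Sig"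
    and T: "\<And>i. \<sigma> (h @ wprefix (Suc i) z) \<in> T"
  shows "inf_path T (res_state A \<sigma> h) z"
proof -
  have "\<sigma> (h @ wprefix (Suc i) z) = (res_state A \<sigma> (h @ wprefix i z), z i, res_state A \<sigma> (h @ wprefix (Suc i) z))" for i
    using resolver_step(1)[OF \<sigma>, of "h @ wprefix i z" "z i"] assms(2,3)
    by (auto simp: wprefix_Suc omega_words_def wprefix_def)
  with T have "walk T (\<lambda>i. res_state A \<sigma> (h @ wprefix i z)) z"
    unfolding walk_def by metis
  then show ?thesis
    unfolding inf_path_def by (intro exI[of _ "\<lambda>i. res_state A \<sigma> (h @ wprefix i z)"]) simp
qed

lemma resolver_run_accepting:
  "is_resolver Sig A \<sigma> \<Longrightarrow> w \<in> lang Sig A \<Longrightarrow> (\<lambda>i. col A (\<sigma> (wprefix (Suc i) w))) \<in> acc A"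
  by (auto simp: is_resolver_def accepting_run_def lang_def)

section \<open>Safe components\<close>

lemma safe_trans_iff:
  "is_cobuchi Sig A \<Longrightarrow> t \<in> safe_trans A \<longleftrightarrow> t \<in> trans A \<and> 1 \<notin> col A t"
  by (auto simp: is_cobuchi_def is_gen_cobuchi_def safe_trans_def cobuchi_trans_def)

lemma safe_lang_eq:
  "is_automaton Sig A \<Longrightarrow> safe_lang Sig A s = {z. inf_path (safe_trans A) s z}"
  by (auto simp: safe_lang_def inf_path_def walk_def omega_words_def is_automaton_def safe_trans_def)

lemma safe_trans_labels: "is_automaton Sig A \<Longrightarrow> safe_trans A \<subseteq> UNIV \<times> Sig \<times> UNIV"
  by (auto simp: is_automaton_def safe_trans_def)

lemma safe_scc_refl: "s \<in> states A \<Longrightarrow> s \<in> safe_scc A s"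
  by (simp add: safe_scc_def)

lemma safe_scc_subset: "safe_scc A s \<subseteq> states A"
  by (auto simp: safe_scc_def)

lemma safe_scc_eq: "t \<in> safe_scc A s \<Longrightarrow> safe_scc A t = safe_scc A s"
  unfolding safe_scc_def by (blast intro: rtrancl_trans)

lemma safe_scc_connected:
  assumes "s \<in> safe_scc A q" "t \<in> safe_scc A q"
  obtains v where "fin_path (safe_trans A) s v t"
proof -
  have "(s, t) \<in> (safe_edges A)\<^sup>*"
    using assms unfolding safe_scc_def by (blast intro: rtrancl_trans)
  then have "\<exists>v. fin_path (safe_trans A) s v t"
  proof (induction rule: rtrancl_induct)
    case (step y z)
    then show ?case
      by (auto simp: safe_edges_def intro: fin_path_snoc)
  qed (auto intro: fin_path_Nil)
  with that show ?thesis by blast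
qed

lemma safe_trans_same_scc:
  "normal_form A \<Longrightarrow> (p, a, q) \<in> safe_trans A \<Longrightarrow> safe_scc A q = safe_scc A p"
  by (auto simp: normal_form_def safe_trans_def)

lemma fin_path_same_scc:
  "fin_path (safe_trans A) s v t \<Longrightarrow> normal_form A \<Longrightarrow> safe_scc A t = safe_scc A s"
  by (induction rule: fin_path.induct) (auto dest: safe_trans_same_scc)

lemma safe_deterministic_suffix:
  assumes "safe_deterministic A"
  shows "fin_path (safe_trans A) s v t \<Longrightarrow> inf_path (safe_trans A) s (conc v z) \<Longrightarrow> inf_path (safe_trans A) t z"
proof (induction rule: fin_path.induct)
  case (fin_path_Cons n a n' y m)
  then obtain ns where ns: "ns 0 = n" "walk (safe_trans A) ns (conc (a # y) z)"
    by (auto simp: inf_path_def)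
  then have "(n, a, ns 1) \<in> safe_trans A"
    by (auto simp: walk_def conc_Cons dest: spec[of _ 0])
  with fin_path_Cons.hyps(1) assms have "ns 1 = n'"
    by (auto simp: safe_deterministic_def)
  with ns(2) have "inf_path (safe_trans A) n' (conc y z)"
    unfolding inf_path_def walk_def conc_Cons
    by (intro exI[of _ "\<lambda>i. ns (Suc i)"]) (auto dest: spec[of _ "Suc _"])
  then show ?case
    by (rule fin_path_Cons.IH)
qed (simp add: conc_def)

section \<open>A safe component embeds into the states of B\<close>

locale nontrivial_safe_component =
  fixes Sig :: "'a set" and L :: "(nat \<Rightarrow> 'a) set" and C :: "'c set"
    and B :: "('p, 'a, 'c set) automaton" and \<sigma>B :: "'a list \<Rightarrow> 'p \<times> 'a \<times> 'p"
    and A :: "('q, 'a, nat set) automaton" and \<sigma>A :: "'a list \<Rightarrow> 'q \<times> 'a \<times> 'q"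
    and S :: "'q set"
  assumes L_words: "L \<subseteq> omega_words Sig" and prefix_indep: "prefix_independent Sig L"
    and B_gen_cobuchi: "is_gen_cobuchi Sig C B" and B_resolver: "is_resolver Sig B \<sigma>B"
    and lang_B: "lang Sig B = L"
    and A_cobuchi: "is_cobuchi Sig A" and A_resolver: "is_resolver Sig A \<sigma>A" and A_nice: "nice Sig A"
    and A_safe_minimal: "safe_minimal Sig A" and A_safe_centralised: "safe_centralised Sig A"
    and lang_A: "lang Sig A = L"
    and S_component: "S \<in> safe_components A" and S_card: "2 \<le> card S"
begin

abbreviation "safeA \<equiv> safe_trans A"
abbreviation "stateA \<equiv> res_state A \<sigma>A"
abbreviation "stateB \<equiv> res_state B \<sigma>B"

lemma A_automaton: "is_automaton Sig A" and A_acc: "acc A = gen_cobuchi_cond {1}"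
  using A_cobuchi by (auto simp: is_cobuchi_def is_gen_cobuchi_def)

lemma B_automaton: "is_automaton Sig B" and B_acc: "acc B = gen_cobuchi_cond C" and C_finite: "finite C"
  using B_gen_cobuchi by (auto simp: is_gen_cobuchi_def)

lemma safeA_labels: "fin_path safeA s v t \<Longrightarrow> set v \<subseteq> Sig"
  by (erule fin_path_labels) (rule safe_trans_labels[OF A_automaton])

lemma lang_from_A_state:
  assumes "q \<in> states A"
  shows "lang Sig (A\<lparr>init := q\<rparr>) = L"
proof (rule lang_from_reachable_eq[OF A_acc _ prefix_indep lang_A L_words])
  show "trans A \<subseteq> states A \<times> Sig \<times> states A"
    using A_automaton by (simp add: is_automaton_def)
  show "semantically_deterministic Sig A"
    using A_nice by (simp add: nice_def)
  show "(init A, q) \<in> (step_rel A)\<^sup>*"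
    using A_nice assms unfolding nice_def all_reachable_def step_rel_def by blast
qed

lemma A_states_equiv: "p \<in> states A \<Longrightarrow> q \<in> states A \<Longrightarrow> equiv_states Sig A p q"
  by (simp add: equiv_states_def lang_from_A_state)

lemma safe_path_in_L:
  assumes "q \<in> states A" "inf_path safeA q z"
  shows "z \<in> L"
proof -
  have "z \<in> lang Sig (A\<lparr>init := q\<rparr>)"
    by (rule inf_path_in_lang[OF A_acc _ _ _ safe_trans_labels[OF A_automaton] assms(2)])
      (auto simp: safe_trans_iff[OF A_cobuchi])
  with assms(1) show ?thesis
    by (simp add: lang_from_A_state)
qed

lemma S_eq:
  obtains q where "q \<in> states A" "S = safe_scc A q"
  using S_component unfolding safe_components_def by blast

lemma S_subset: "S \<subseteq> states A"
  by (metis S_eq safe_scc_subset)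

lemma S_finite: "finite S"
  using A_automaton by (intro finite_subset[OF S_subset]) (simp add: is_automaton_def)

lemma S_scc: "s \<in> S \<Longrightarrow> safe_scc A s = S"
  by (metis S_eq safe_scc_eq)

lemma S_closed:
  assumes "s \<in> S" and path: "fin_path safeA s v t"
  shows "t \<in> S"
proof -
  have "safeA \<subseteq> states A \<times> UNIV \<times> states A"
    using A_automaton by (auto simp: is_automaton_def safe_trans_def)
  with path have "t \<in> states A"
    by (rule fin_path_closed) (use S_subset assms(1) in blast)
  moreover have "safe_scc A t = S"
    using fin_path_same_scc[OF path] A_nice S_scc[OF \<open>s \<in> S\<close>] by (simp add: nice_def)
  ultimately show "t \<in> S"
    using safe_scc_refl by metis
qed

lemma S_connected:
  assumes "s \<in> S" "t \<in> S"
  obtains v where "fin_path safeA s v t"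
proof -
  have "s \<in> safe_scc A s" "t \<in> safe_scc A s"
    using S_scc[OF assms(1)] assms by simp_all
  then show ?thesis
    by (rule safe_scc_connected) (rule that)
qed

lemma S_live:
  assumes "s \<in> S"
  obtains z where "inf_path safeA s z"
proof -
  have "\<exists>a y. (x, a, y) \<in> safeA \<and> y \<in> S" if "x \<in> S" for x
  proof -
    have "\<not> S \<subseteq> {x}"
    proof
      assume "S \<subseteq> {x}"
      then have "card S \<le> 1"
        using card_mono[of "{x}" S] by simp
      with S_card show False by simp
    qed
    then obtain t where "t \<in> S" "t \<noteq> x"
      by blast
    then obtain v where "fin_path safeA x v t"
      using S_connected \<open>x \<in> S\<close> by blast
    then obtain a x' where "(x, a, x') \<in> safeA"
      using \<open>t \<noteq> x\<close> by (cases rule: fin_path.cases) auto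
    moreover have "x' \<in> S"
      using S_closed[OF \<open>x \<in> S\<close> fin_path_Cons[OF calculation fin_path_Nil]] .
    ultimately show ?thesis
      by blast
  qed
  then show ?thesis
    using inf_path_if_successors[OF _ assms] that by blast
qed

lemma forward_stabilisation:
  obtains u s1 c where "set u \<subseteq> Sig" "s1 \<in> S" "c \<in> C"
    "\<And>x s. fin_path safeA s1 x s \<Longrightarrow> x \<noteq> [] \<Longrightarrow> c \<notin> col B (\<sigma>B (u @ x))"
proof -
  have "S \<noteq> {}"
    using S_card by auto
  then obtain q where "q \<in> S"
    by blast
  obtain z0 where "inf_path safeA q z0"
    using S_live[OF \<open>q \<in> S\<close>] .
  have accepting: "(\<lambda>i. col B (\<sigma>B (wprefix (Suc i) z))) \<in> gen_cobuchi_cond C"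
    if "inf_path safeA q z" for z
  proof -
    have "z \<in> lang Sig B"
      using safe_path_in_L[OF _ that] \<open>q \<in> S\<close> S_subset lang_B by blast
    then show ?thesis
      using resolver_run_accepting[OF B_resolver] B_acc by simp
  qed
  obtain u s1 c where "fin_path safeA q u s1" "c \<in> C"
    and stable: "\<And>z i. inf_path safeA s1 z \<Longrightarrow> c \<notin> col B (\<sigma>B (u @ wprefix (Suc i) z))"
    by (rule avoided_colour[where F = "\<lambda>x. col B (\<sigma>B x)", OF C_finite _ \<open>inf_path safeA q z0\<close>])
      (blast intro: accepting)+
  moreover have "s1 \<in> S"
    using S_closed[OF \<open>q \<in> S\<close> \<open>fin_path safeA q u s1\<close>] .
  moreover have "c \<notin> col B (\<sigma>B (u @ x))" if x: "fin_path safeA s1 x s" "x \<noteq> []" for x s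
  proof -
    obtain z where "inf_path safeA s z"
      using S_live S_closed[OF \<open>s1 \<in> S\<close> x(1)] by blast
    from stable x(1) this x(2) show ?thesis
      by (rule fin_path_prefix_property[where P = "\<lambda>x. c \<notin> col B (\<sigma>B (u @ x))"])
  qed
  moreover have "set u \<subseteq> Sig"
    using safeA_labels[OF \<open>fin_path safeA q u s1\<close>] .
  ultimately show ?thesis
    using that by blast
qed

end

locale forward_stabilised = nontrivial_safe_component +
  fixes u and s1 and c
  assumes u_words: "set u \<subseteq> Sig" and s1_in_S: "s1 \<in> S" and c_in_C: "c \<in> C"
    and c_avoided: "\<And>x s. fin_path safeA s1 x s \<Longrightarrow> x \<noteq> [] \<Longrightarrow> c \<notin> col B (\<sigma>B (u @ x))"
begin

text \<open>While A reads safe words from s1 after u, B's resolver only takes transitions of cfree;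
  in this way cfree simulates the safe runs inside S.\<close>

definition reached where
  "reached = {stateB (u @ v) | v. \<exists>s. fin_path safeA s1 v s}"

definition cfree where
  "cfree = {t \<in> trans B. c \<notin> col B t \<and> fst t \<in> reached \<and> snd (snd t) \<in> reached}"

lemma cfree_subset: "cfree \<subseteq> trans B"
  by (auto simp: cfree_def)

lemma cfree_labels: "cfree \<subseteq> UNIV \<times> Sig \<times> UNIV"
  using cfree_subset B_automaton by (auto simp: is_automaton_def)

lemma cfree_closed: "fin_path cfree p x p' \<Longrightarrow> p \<in> reached \<Longrightarrow> p' \<in> reached"
  by (erule fin_path_closed) (auto simp: cfree_def)

lemma resolver_B_edge:
  assumes "fin_path safeA s1 v s" "(s, a, s') \<in> safeA"
  shows "\<sigma>B (u @ v @ [a]) \<in> cfree"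
proof -
  have va: "fin_path safeA s1 (v @ [a]) s'"
    using fin_path_snoc[OF assms] .
  have "set (u @ v) \<subseteq> Sig" "a \<in> Sig"
    using u_words safeA_labels[OF va] by auto
  from resolver_step[OF B_resolver this]
  have "\<sigma>B (u @ v @ [a]) = (stateB (u @ v), a, stateB (u @ v @ [a]))" "\<sigma>B (u @ v @ [a]) \<in> trans B"
    by simp_all
  moreover have "stateB (u @ v) \<in> reached" "stateB (u @ v @ [a]) \<in> reached"
    using assms(1) va unfolding reached_def by blast+
  ultimately show ?thesis
    using c_avoided[OF va] by (simp add: cfree_def)
qed

lemma resolver_B_fin_path:
  "fin_path safeA s x s' \<Longrightarrow> fin_path safeA s1 v s \<Longrightarrow> fin_path cfree (stateB (u @ v)) x (stateB (u @ v @ x))"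
proof (induction arbitrary: v rule: fin_path.induct)
  case (fin_path_Cons s a s'' x s')
  have "fin_path cfree (stateB (u @ v @ [a])) x (stateB (u @ (v @ [a]) @ x))"
    using fin_path_Cons.IH[OF fin_path_snoc[OF fin_path_Cons.prems fin_path_Cons.hyps(1)]] by simp
  moreover have "\<sigma>B (u @ v @ [a]) = (stateB (u @ v), a, stateB (u @ v @ [a]))"
    using resolver_step(1)[OF B_resolver, of "u @ v" a] u_words
      safeA_labels[OF fin_path_snoc[OF fin_path_Cons.prems fin_path_Cons.hyps(1)]] by simp
  ultimately show ?case
    using resolver_B_edge[OF fin_path_Cons.prems fin_path_Cons.hyps(1)] by (auto intro: fin_path.intros)
qed (simp add: fin_path_Nil)

lemma resolver_B_inf_path:
  assumes v: "fin_path safeA s1 v s" and z: "inf_path safeA s z"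
  shows "inf_path cfree (stateB (u @ v)) z"
proof (rule resolver_inf_path[OF B_resolver])
  show "set (u @ v) \<subseteq> Sig"
    using u_words safeA_labels[OF v] by simp
  show "z \<in> omega_words Sig"
    using inf_path_labels[OF z safe_trans_labels[OF A_automaton]] .
  obtain ns where ns: "ns 0 = s" "walk safeA ns z"
    using z by (auto simp: inf_path_def)
  fix i
  have "fin_path safeA s1 (v @ wprefix i z) (ns i)"
    using fin_path_append[OF v fin_path_wprefix[OF ns(2), unfolded ns(1)]] .
  from resolver_B_edge[OF this] ns(2) show "\<sigma>B ((u @ v) @ wprefix (Suc i) z) \<in> cfree"
    by (simp add: walk_def wprefix_Suc) blast
qed

lemma reached_live:
  assumes "p \<in> reached"
  obtains z where "inf_path cfree p z"
proof -
  obtain v s where v: "fin_path safeA s1 v s" and p: "p = stateB (u @ v)"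
    using assms unfolding reached_def by blast
  obtain z where "inf_path safeA s z"
    by (rule S_live[OF S_closed[OF s1_in_S v]])
  with resolver_B_inf_path[OF v] p have "inf_path cfree p z"
    by simp
  then show ?thesis
    by (rule that)
qed

lemma cfree_path_in_L:
  assumes "inf_path cfree (stateB u) z"
  shows "conc u z \<in> L"
proof -
  have "z \<in> lang Sig (B\<lparr>init := stateB u\<rparr>)"
    using inf_path_in_lang[OF B_acc c_in_C cfree_subset _ cfree_labels assms] by (simp add: cfree_def)
  moreover have "lang Sig (B\<lparr>init := stateB u\<rparr>) \<subseteq> L"
    using lang_from_reachable_subset[OF B_acc _ prefix_indep _ res_state_reachable[OF B_resolver u_words]]
      B_automaton lang_B by (simp add: is_automaton_def)
  moreover have "z \<in> omega_words Sig"
    using inf_path_labels[OF assms cfree_labels] .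
  ultimately show ?thesis
    using prefix_indep u_words unfolding prefix_independent_def by blast
qed

lemma resolver_A_accepts_after_u:
  assumes "inf_path cfree (stateB u) z"
  shows "(\<lambda>i. col A (\<sigma>A (u @ wprefix (Suc i) z))) \<in> gen_cobuchi_cond {1}"
proof -
  have "(\<lambda>i. col A (\<sigma>A (wprefix (Suc i) (conc u z)))) \<in> gen_cobuchi_cond {1}"
    using resolver_run_accepting[OF A_resolver] cfree_path_in_L[OF assms] lang_A A_acc by simp
  from gen_cobuchi_cond_shift[OF this, of "length u"]
  have "(\<lambda>i. col A (\<sigma>A (wprefix (Suc (i + length u)) (conc u z)))) \<in> gen_cobuchi_cond {1}"
    by simp
  moreover have "wprefix (Suc (i + length u)) (conc u z) = u @ wprefix (Suc i) z" for i
    using wprefix_conc[of u "Suc i" z] by (simp add: add.commute)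
  ultimately show ?thesis
    by simp
qed

lemma reverse_stabilisation:
  obtains y v1 s' where "set y \<subseteq> Sig" "fin_path safeA s1 v1 s'"
    "\<And>x p. fin_path cfree (stateB (u @ v1)) x p \<Longrightarrow> x \<noteq> [] \<Longrightarrow> \<sigma>A (u @ y @ x) \<in> safeA"
proof -
  have "stateB u \<in> reached"
    unfolding reached_def using fin_path_Nil by force
  then obtain z0 where "inf_path cfree (stateB u) z0"
    by (rule reached_live)
  obtain y p1 where y: "fin_path cfree (stateB u) y p1"
    and stable: "\<And>z i. inf_path cfree p1 z \<Longrightarrow> 1 \<notin> col A (\<sigma>A (u @ y @ wprefix (Suc i) z))"
    by (rule avoided_colour[where F = "\<lambda>x. col A (\<sigma>A (u @ x))" and J = "{1}", OF _ _ \<open>inf_path cfree (stateB u) z0\<close>])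
      (blast intro: resolver_A_accepts_after_u)+
  have "p1 \<in> reached"
    using cfree_closed[OF y \<open>stateB u \<in> reached\<close>] .
  then obtain v1 s' where "fin_path safeA s1 v1 s'" "p1 = stateB (u @ v1)"
    unfolding reached_def by blast
  moreover have "\<sigma>A (u @ y @ x) \<in> safeA" if x: "fin_path cfree p1 x p" "x \<noteq> []" for x p
  proof -
    obtain z where "inf_path cfree p z"
      by (rule reached_live[OF cfree_closed[OF x(1) \<open>p1 \<in> reached\<close>]])
    from stable x(1) this x(2) have "1 \<notin> col A (\<sigma>A (u @ y @ x))"
      by (rule fin_path_prefix_property[where P = "\<lambda>x. 1 \<notin> col A (\<sigma>A (u @ y @ x))"])
    moreover obtain x' a where "x = x' @ [a]"
      using x(2) by (cases x rule: rev_exhaust) auto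
    moreover have "set (u @ y @ x') \<subseteq> Sig" "a \<in> Sig"
      using u_words fin_path_labels[OF y cfree_labels] fin_path_labels[OF x(1) cfree_labels] calculation(2)
      by auto
    ultimately show ?thesis
      using resolver_step(2)[OF A_resolver] safe_trans_iff[OF A_cobuchi] by (metis append.assoc)
  qed
  ultimately show ?thesis
    using that fin_path_labels[OF y cfree_labels] by blast
qed

end

locale reverse_stabilised = forward_stabilised +
  fixes y and v1 and s'
  assumes y_words: "set y \<subseteq> Sig" and v1_path: "fin_path safeA s1 v1 s'"
    and A_safe_after: "\<And>x p. fin_path cfree (stateB (u @ v1)) x p \<Longrightarrow> x \<noteq> [] \<Longrightarrow> \<sigma>A (u @ y @ x) \<in> safeA"
begin

lemma resolver_A_safe:
  assumes t: "fin_path cfree (stateB (u @ v1)) t p" and z: "inf_path cfree p z"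
  shows "inf_path safeA (stateA (u @ y @ t)) z"
proof (rule resolver_inf_path[OF A_resolver])
  show "set (u @ y @ t) \<subseteq> Sig"
    using u_words y_words fin_path_labels[OF t cfree_labels] by simp
  show "z \<in> omega_words Sig"
    using inf_path_labels[OF z cfree_labels] .
  fix i
  obtain p' where "fin_path cfree p (wprefix (Suc i) z) p'"
    using inf_path_wprefix[OF z] .
  from A_safe_after[OF fin_path_append[OF t this]]
  show "\<sigma>A ((u @ y @ t) @ wprefix (Suc i) z) \<in> safeA"
    by (simp add: wprefix_Suc)
qed

lemma safe_lang_le_resolver_state:
  assumes v: "fin_path safeA s' v s"
  shows "safe_lang Sig A s \<subseteq> safe_lang Sig A (stateA (u @ y @ v))"
proof
  fix z assume "z \<in> safe_lang Sig A s"
  then have "inf_path cfree (stateB (u @ v1 @ v)) z"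
    using resolver_B_inf_path[OF fin_path_append[OF v1_path v]] by (simp add: safe_lang_eq[OF A_automaton])
  with resolver_A_safe[OF resolver_B_fin_path[OF v v1_path]]
  show "z \<in> safe_lang Sig A (stateA (u @ y @ v))"
    by (simp add: safe_lang_eq[OF A_automaton])
qed

lemma resolver_A_state_in_states: "fin_path safeA s' v s \<Longrightarrow> stateA (u @ y @ v) \<in> states A"
  using res_state_in_states[OF A_automaton A_resolver] u_words y_words safeA_labels by simp

lemma resolver_A_returns:
  assumes "sm \<in> S" "fin_path safeA s' v sm"
    and maximal: "\<And>t. t \<in> S \<Longrightarrow> safe_lang Sig A sm \<subseteq> safe_lang Sig A t \<Longrightarrow> safe_lang Sig A sm = safe_lang Sig A t"
  shows "stateA (u @ y @ v) = sm"
proof -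
  let ?r = "stateA (u @ y @ v)"
  have "sm \<in> states A" "?r \<in> states A"
    using assms(1) S_subset resolver_A_state_in_states[OF assms(2)] by auto
  moreover note incl = safe_lang_le_resolver_state[OF assms(2)]
  ultimately have "safe_scc A ?r = safe_scc A sm"
    using A_safe_centralised A_states_equiv unfolding safe_centralised_def by metis
  then have "?r \<in> S"
    using S_scc[OF assms(1)] safe_scc_refl[OF \<open>?r \<in> states A\<close>] by simp
  with maximal incl have "safe_lang Sig A sm = safe_lang Sig A ?r"
    by blast
  then show ?thesis
    using A_safe_minimal A_states_equiv \<open>sm \<in> states A\<close> \<open>?r \<in> states A\<close>
    unfolding safe_minimal_def by metis
qed

lemma safe_lang_eq_cfree_lang:
  assumes v: "fin_path safeA s' v sm" and returns: "stateA (u @ y @ v) = sm"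
    and w: "fin_path safeA sm w t"
  shows "safe_lang Sig A t = {z. inf_path cfree (stateB (u @ v1 @ v @ w)) z}"
proof (intro equalityI subsetI CollectI)
  fix z assume "z \<in> safe_lang Sig A t"
  then show "inf_path cfree (stateB (u @ v1 @ v @ w)) z"
    using resolver_B_inf_path[OF fin_path_append[OF v1_path fin_path_append[OF v w]]]
    by (simp add: safe_lang_eq[OF A_automaton])
next
  fix z assume "z \<in> {z. inf_path cfree (stateB (u @ v1 @ v @ w)) z}"
  then have "inf_path cfree (stateB (u @ v1 @ v)) (conc w z)"
    using inf_path_conc[OF resolver_B_fin_path[OF w fin_path_append[OF v1_path v]]] by simp
  then have "inf_path safeA sm (conc w z)"
    using resolver_A_safe[OF resolver_B_fin_path[OF v v1_path]] returns by simp
  then show "z \<in> safe_lang Sig A t"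
    using safe_deterministic_suffix[OF _ w] A_nice by (simp add: nice_def safe_lang_eq[OF A_automaton])
qed

lemma embeds_into_states_B:
  obtains g where "inj_on g S" "g ` S \<subseteq> states B"
proof -
  obtain sm where "sm \<in> S" and maximal: "\<And>t. t \<in> S \<Longrightarrow> safe_lang Sig A sm \<subseteq> safe_lang Sig A t \<Longrightarrow>
      safe_lang Sig A sm = safe_lang Sig A t"
    using finite_has_maximal[of "safe_lang Sig A ` S"] S_finite S_card by fastforce
  obtain v where v: "fin_path safeA s' v sm"
    using S_connected[OF S_closed[OF s1_in_S v1_path] \<open>sm \<in> S\<close>] .
  have returns: "stateA (u @ y @ v) = sm"
    by (rule resolver_A_returns[OF \<open>sm \<in> S\<close> v maximal])
  have "\<forall>t\<in>S. \<exists>w. fin_path safeA sm w t"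
    using S_connected[OF \<open>sm \<in> S\<close>] by metis
  then obtain w where w: "\<And>t. t \<in> S \<Longrightarrow> fin_path safeA sm (w t) t"
    by metis
  define g where "g t = stateB (u @ v1 @ v @ w t)" for t
  have "inj_on g S"
  proof (rule inj_onI)
    fix a b assume "a \<in> S" "b \<in> S" "g a = g b"
    then have "safe_lang Sig A a = safe_lang Sig A b"
      using safe_lang_eq_cfree_lang[OF v returns w] by (simp add: g_def)
    with \<open>a \<in> S\<close> \<open>b \<in> S\<close> show "a = b"
      using A_safe_minimal A_states_equiv S_subset unfolding safe_minimal_def by blast
  qed
  moreover have "g ` S \<subseteq> states B"
    using res_state_in_states[OF B_automaton B_resolver] u_words safeA_labels[OF v1_path]
      safeA_labels[OF v] safeA_labels[OF w] by (auto simp: g_def)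
  ultimately show ?thesis
    using that by blast
qed

end

context nontrivial_safe_component
begin

theorem card_S_le_card_states_B: "card S \<le> card (states B)"
proof -
  obtain u s1 c where "set u \<subseteq> Sig" "s1 \<in> S" "c \<in> C"
    "\<And>x s. fin_path safeA s1 x s \<Longrightarrow> x \<noteq> [] \<Longrightarrow> c \<notin> col B (\<sigma>B (u @ x))"
    by (rule forward_stabilisation) blast
  then interpret forward_stabilised Sig L C B \<sigma>B A \<sigma>A S u s1 c
    by unfold_locales
  obtain y v1 s' where "set y \<subseteq> Sig" "fin_path safeA s1 v1 s'"
    "\<And>x p. fin_path cfree (stateB (u @ v1)) x p \<Longrightarrow> x \<noteq> [] \<Longrightarrow> \<sigma>A (u @ y @ x) \<in> safeA"
    by (rule reverse_stabilisation) blast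
  then interpret reverse_stabilised Sig L C B \<sigma>B A \<sigma>A S u s1 c y v1 s'
    by unfold_locales
  obtain g where "inj_on g S" "g ` S \<subseteq> states B"
    by (rule embeds_into_states_B) blast
  then show ?thesis
    using card_inj_on_le B_automaton by (auto simp: is_automaton_def)
qed

end

theorem proposition21:
  fixes Sig :: "'a set"
    and L :: "(nat \<Rightarrow> 'a) set"
    and C :: "'c set"
    and B :: "('p, 'a, 'c set) automaton"
    and Amin :: "('q, 'a, nat set) automaton"
  assumes "L \<subseteq> omega_words Sig"
    and "prefix_independent Sig L"
    and "is_gen_cobuchi Sig C B"
    and "history_deterministic Sig B"
    and "lang Sig B = L"
    and "is_cobuchi Sig Amin"
    and "history_deterministic Sig Amin"
    and "nice Sig Amin"
    and "safe_minimal Sig Amin"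
    and "safe_centralised Sig Amin"
    and "lang Sig Amin = L"
  shows "Max (card ` safe_components Amin) \<le> card (states B)"
proof -
  obtain \<sigma>B \<sigma>A where "is_resolver Sig B \<sigma>B" "is_resolver Sig Amin \<sigma>A"
    using assms(4,7) by (auto simp: history_deterministic_def)
  have "finite (states Amin)" "init Amin \<in> states Amin"
    using assms(6) by (auto simp: is_cobuchi_def is_gen_cobuchi_def is_automaton_def)
  then obtain S where S: "S \<in> safe_components Amin" "Max (card ` safe_components Amin) = card S"
    using Max_in[of "card ` safe_components Amin"] by (fastforce simp: safe_components_def)
  show ?thesis
  proof (cases "card S \<le> 1")
    case True
    have "finite (states B)" "init B \<in> states B"
      using assms(3) by (auto simp: is_gen_cobuchi_def is_automaton_def)
    then have "1 \<le> card (states B)"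
      by (metis card_0_eq empty_iff less_one not_le)
    with True S(2) show ?thesis
      by simp
  next
    case False
    then interpret nontrivial_safe_component Sig L C B \<sigma>B Amin \<sigma>A S
      using assms \<open>is_resolver Sig B \<sigma>B\<close> \<open>is_resolver Sig Amin \<sigma>A\<close> S(1) by unfold_locales auto
    show ?thesis
      using card_S_le_card_states_B S(2) by simp
  qed
qed

end
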